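(* Consider the population game without a central planner, i.e. with threshold $A_t = 1$ for all $t \in [0,T]$. Suppose $g_{eq} \in C[0,T]$ with $g_{eq,t} \in [0,1]$ is a symmetric (Nash) equilibrium exposure profile, i.e. $$J_\alpha(g_{eq}, g_{eq}, 1) \le J_\alpha(g_{eq}, g^\alpha, 1)$$ for every admissible individual strategy $g^\alpha \in C[0,T]$ with $g^\alpha_t\in[0,1]$, and the canonical individual's equilibrium strategy equals $g_{eq}$. Then, by the Pontryagin minimum principle, there is an adjoint function $\lambda$ on $[0,T]$ such that for all $t\in[0,T]$ $$g_{eq,t}=\min\Big(\frac{B}{\beta I_t (C-\lambda_t)},1\Big)\mathbf 1_{\{C>\lambda_t\}}+\mathbf 1_{\{C\le\lambda_t\}},$$ and $(S,I,\lambda)$ satisfy $$\frac{dS_t}{dt}=-\beta g_{eq,t}^2S_tI_t,\qquad \frac{dI_t}{dt}=\beta g_{eq,t}^2S_tI_t-\gamma I_t,\qquad \frac{d\lambda_t}{dt}=g_{eq,t}\big(B-\beta I_t g_{eq,t}(C-\lambda_t)\big),$$ with boundary conditions $S_0=1-\epsilon$, $I_0=\epsilon$, $\lambda_T=-R$.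
   Context: Model: a finite horizon $T>0$; positive real constants $\beta$ (infection probability per interaction), $\gamma$ (recovery rate), $\epsilon$ (initial infected fraction), $B$ (benefit rate per unit exposure), $C$ (one-time cost of infection), $R$ (reward for surviving to $T$). The population plays a symmetric exposure profile $g\in C[0,T]$ and the susceptible and infected fractions evolve by $\dot S_t=-\beta g_t^2S_tI_t$, $\dot I_t=\beta g_t^2S_tI_t-\gamma I_t$, $S_0=1-\epsilon$, $I_0=\epsilon$. A canonical individual $\alpha$ playing $g^\alpha\in C[0,T]$ is infected at a random time $\tau_\alpha$ whose survival probability $P_t:=P(\tau_\alpha>t)$ satisfies $\dot P_t=-\beta g^\alpha_t g_t I_t P_t$, $P_0=1$. A planner strategy is $A\in C[0,T]$ with $A_t\in[0,1]$, and the individual must satisfy $g^\alpha_t, g_t\le A_t$. The individual's cost is $$J_\alpha(g,g^\alpha,A)=\int_0^T P_t\, g^\alpha_t\{-B+C\beta g_tI_t\}\,dt-R\,P_T,$$ equivalently $\mathbb E\big[-\int_0^{T\wedge\tau_\alpha}Bg^\alpha_s\,ds+C\mathbf 1_{\{\tau_\alpha\le T\}}-R\mathbf 1_{\{\tau_\alpha>T\}}\big]$. *)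

theory Defs
  imports "HOL-Analysis.Analysis"
begin

text \<open>Survival probability of the canonical individual: the unique solution of
  dP/dt = - beta * ga t * g t * I t * P t, P 0 = 1.\<close>
definition surv :: "real \<Rightarrow> (real \<Rightarrow> real) \<Rightarrow> (real \<Rightarrow> real) \<Rightarrow> (real \<Rightarrow> real) \<Rightarrow> real \<Rightarrow> real" where
  "surv \<beta> ga g I t = exp (- integral {0..t} (\<lambda>s. \<beta> * ga s * g s * I s))"

text \<open>Individual cost J_alpha(g, ga, A), with I the infected fraction generated by g.
  The planner threshold A only enters through the admissibility constraint.\<close>
definition cost :: "real \<Rightarrow> real \<Rightarrow> real \<Rightarrow> real \<Rightarrow> real \<Rightarrow> (real \<Rightarrow> real) \<Rightarrow> (real \<Rightarrow> real)
    \<Rightarrow> (real \<Rightarrow> real) \<Rightarrow> real" where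
  "cost T \<beta> B C R I g ga =
     integral {0..T} (\<lambda>t. surv \<beta> ga g I t * ga t * (- B + C * \<beta> * g t * I t))
     - R * surv \<beta> ga g I T"

end

theory Submission
  imports Defs
begin

text \<open>Let \<open>lam\<close> solve the adjoint equation, a linear ODE with terminal value \<open>-R\<close>.
  Differentiating \<open>P * lam\<close> and integrating by parts writes the cost of every deviation \<open>ga\<close> as
  \<open>lam 0\<close> plus the integral of \<open>P * (ga - geq) * h\<close>, with the switching function
  \<open>h = -B + \<beta> * geq * I * (C - lam)\<close>. The continuous deviation that pushes \<open>geq\<close> against
  the sign of \<open>h\<close> makes this integrand non-positive, so the equilibrium property forces it to
  vanish: \<open>geq = 1\<close> where \<open>h < 0\<close> and \<open>geq = 0\<close> where \<open>h > 0\<close>. The latter cannot happen, as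
  \<open>geq = 0\<close> gives \<open>h = -B\<close>; solving \<open>h = 0\<close> for \<open>geq\<close>, with \<open>I > 0\<close> from the linear
  equation for \<open>I\<close>, gives the feedback formula.\<close>

lemma continuous_nonpos_integral_nonneg_imp_zero:
  fixes f :: "real \<Rightarrow> real"
  assumes "a < b" and cont: "continuous_on {a..b} f"
    and nonpos: "\<And>t. t \<in> {a..b} \<Longrightarrow> f t \<le> 0" and "0 \<le> integral {a..b} f"
    and t: "t \<in> {a..b}"
  shows "f t = 0"
proof -
  have int: "f integrable_on {a..b}" using cont integrable_continuous_real by blast
  have "integral {a..b} f \<le> integral {a..b} (\<lambda>_. 0)"
    using nonpos int by (intro integral_le) auto
  with assms(4) have "((\<lambda>x. - f x) has_integral 0) (cbox a b)"
    using has_integral_neg[OF int[THEN integrable_integral]] by simp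
  moreover have "continuous_on (cbox a b) (\<lambda>x. - f x)"
    using cont by (auto intro: continuous_intros)
  ultimately have "- f t = 0"
    using has_integral_0_cbox_imp_0[of a b "\<lambda>x. - f x" t] nonpos t \<open>a < b\<close> by auto
  then show ?thesis by simp
qed

lemma linear_ode_solution_formula:
  fixes f c :: "real \<Rightarrow> real"
  assumes cont: "continuous_on {0..T} c"
    and ode: "\<And>t. t \<in> {0..T} \<Longrightarrow> (f has_real_derivative c t * f t) (at t within {0..T})"
    and t: "t \<in> {0..T}"
  shows "f t = f 0 * exp (integral {0..t} c)"
proof -
  let ?u = "\<lambda>t. f t * exp (- integral {0..t} c)"
  have "(?u has_real_derivative 0) (at s within {0..T})" if s: "s \<in> {0..T}" for s
  proof -
    have "(?u has_real_derivative
        c s * f s * exp (- integral {0..s} c) + f s * (exp (- integral {0..s} c) * - c s))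
        (at s within {0..T})"
      using ode[OF s] integral_has_real_derivative[OF cont s]
      by (auto intro!: derivative_eq_intros)
    then show ?thesis by (simp add: algebra_simps)
  qed
  then obtain k where k: "\<And>s. s \<in> {0..T} \<Longrightarrow> ?u s = k"
    using has_field_derivative_zero_constant[of "{0..T}" ?u] by auto
  have "?u t = ?u 0" using k t by (metis atLeastAtMost_iff order_refl order_trans)
  then show ?thesis by (simp add: exp_minus field_simps)
qed

text \<open>Variation of constants, started from the terminal time.\<close>
lemma linear_ode_terminal_value_solvable:
  fixes a b :: "real \<Rightarrow> real"
  assumes a: "continuous_on {0..T} a" and b: "continuous_on {0..T} b"
  shows "\<exists>lam. (\<forall>t\<in>{0..T}. (lam has_real_derivative a t * lam t + b t) (at t within {0..T}))
    \<and> lam T = y"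
proof -
  define A where "A t = integral {0..t} a" for t
  have dA: "(A has_real_derivative a t) (at t within {0..T})" if "t \<in> {0..T}" for t
    unfolding A_def using integral_has_real_derivative[OF a that] .
  have "continuous_on {0..T} A" using dA by (intro DERIV_continuous_on) auto
  then have eb: "continuous_on {0..T} (\<lambda>s. exp (- A s) * b s)"
    using b by (intro continuous_intros)
  define G where "G t = integral {0..t} (\<lambda>s. exp (- A s) * b s)" for t
  have dG: "(G has_real_derivative exp (- A t) * b t) (at t within {0..T})" if "t \<in> {0..T}" for t
    unfolding G_def using integral_has_real_derivative[OF eb that] .
  define lam where "lam t = exp (A t) * (y * exp (- A T) - G T + G t)" for t
  have "(lam has_real_derivative a t * lam t + b t) (at t within {0..T})" if "t \<in> {0..T}" for t
  proof -
    have "(lam has_real_derivative exp (A t) * a t * (y * exp (- A T) - G T + G t)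
        + exp (A t) * (exp (- A t) * b t)) (at t within {0..T})"
      unfolding lam_def using dA[OF that] dG[OF that] by (auto intro!: derivative_eq_intros)
    then show ?thesis unfolding lam_def by (simp add: exp_minus field_simps)
  qed
  moreover have "lam T = y" unfolding lam_def by (simp add: exp_minus)
  ultimately show ?thesis by blast
qed

lemma surv_pos: "0 < surv \<beta> ga g I t"
  unfolding surv_def by simp

lemma surv_has_real_derivative:
  assumes "continuous_on {0..T} (\<lambda>s. \<beta> * ga s * g s * I s)" and "t \<in> {0..T}"
  shows "(surv \<beta> ga g I has_real_derivative - (\<beta> * ga t * g t * I t) * surv \<beta> ga g I t)
    (at t within {0..T})"
  unfolding surv_def[abs_def]
  using integral_has_real_derivative[OF assms] by (auto intro!: derivative_eq_intros)

lemma continuous_on_surv: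
  assumes "continuous_on {0..T} (\<lambda>s. \<beta> * ga s * g s * I s)"
  shows "continuous_on {0..T} (surv \<beta> ga g I)"
  using surv_has_real_derivative[OF assms] by (intro DERIV_continuous_on) auto

text \<open>The coefficient of \<open>P * ga\<close> in the Hamiltonian
  \<open>P * ga * (C * \<beta> * g * I - B) - lam * \<beta> * ga * g * I * P\<close> of the individual's problem.\<close>
definition switching ::
    "real \<Rightarrow> real \<Rightarrow> real \<Rightarrow> (real \<Rightarrow> real) \<Rightarrow> (real \<Rightarrow> real) \<Rightarrow> (real \<Rightarrow> real) \<Rightarrow> real \<Rightarrow> real" where
  "switching \<beta> B C I g lam t = - B + \<beta> * g t * I t * (C - lam t)"

lemma cost_adjoint_representation:
  fixes I g ga lam :: "real \<Rightarrow> real"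
  assumes "0 \<le> T"
    and I: "continuous_on {0..T} I" and g: "continuous_on {0..T} g" and ga: "continuous_on {0..T} ga"
    and lam_ode: "\<forall>t\<in>{0..T}. (lam has_real_derivative g t * (B - \<beta> * I t * g t * (C - lam t)))
        (at t within {0..T})"
    and lam_T: "lam T = - R"
  shows "cost T \<beta> B C R I g ga
    = integral {0..T} (\<lambda>t. surv \<beta> ga g I t * (ga t - g t) * switching \<beta> B C I g lam t) + lam 0"
proof -
  let ?P = "surv \<beta> ga g I"
  let ?h = "switching \<beta> B C I g lam"
  have rate: "continuous_on {0..T} (\<lambda>s. \<beta> * ga s * g s * I s)"
    using ga g I by (intro continuous_intros)
  define dPlam where "dPlam t = - (\<beta> * ga t * g t * I t) * ?P t * lam t
      + ?P t * (g t * (B - \<beta> * I t * g t * (C - lam t)))" for t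
  have "((\<lambda>t. ?P t * lam t) has_vector_derivative dPlam t) (at t within {0..T})"
    if "t \<in> {0..T}" for t
    unfolding has_real_derivative_iff_has_vector_derivative[symmetric] dPlam_def
    using surv_has_real_derivative[OF rate that] lam_ode that
    by (auto intro!: derivative_eq_intros)
  then have by_parts: "(dPlam has_integral (?P T * lam T - ?P 0 * lam 0)) {0..T}"
    using fundamental_theorem_of_calculus[of 0 T] \<open>0 \<le> T\<close> by auto
  have "continuous_on {0..T} lam"
    using lam_ode by (intro DERIV_continuous_on) auto
  then have "continuous_on {0..T} (\<lambda>t. ?P t * (ga t - g t) * ?h t)"
    unfolding switching_def using continuous_on_surv[OF rate] ga g I
    by (intro continuous_intros)
  then have "((\<lambda>t. ?P t * (ga t - g t) * ?h t) has_integral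
      integral {0..T} (\<lambda>t. ?P t * (ga t - g t) * ?h t)) {0..T}"
    using integrable_continuous_real by blast
  from has_integral_diff[OF this by_parts]
  have "((\<lambda>t. ?P t * ga t * (- B + C * \<beta> * g t * I t)) has_integral
      integral {0..T} (\<lambda>t. ?P t * (ga t - g t) * ?h t) - (?P T * lam T - ?P 0 * lam 0)) {0..T}"
    unfolding dPlam_def switching_def by (simp add: algebra_simps power2_eq_square)
  then show ?thesis
    unfolding cost_def using lam_T by (simp add: integral_unique surv_def)
qed

text \<open>A continuous competitor that moves \<open>g\<close> towards \<open>1\<close> where \<open>h < 0\<close> and towards \<open>0\<close>
  where \<open>h > 0\<close>, by a fraction \<open>min 1 \<bar>h\<bar>\<close> of the available room.\<close>
definition descent_control :: "(real \<Rightarrow> real) \<Rightarrow> (real \<Rightarrow> real) \<Rightarrow> real \<Rightarrow> real" where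
  "descent_control h g t = g t + min 1 (max 0 (- h t)) * (1 - g t) - min 1 (max 0 (h t)) * g t"

lemma continuous_on_descent_control:
  "continuous_on S h \<Longrightarrow> continuous_on S g \<Longrightarrow> continuous_on S (descent_control h g)"
  unfolding descent_control_def[abs_def] by (intro continuous_intros)

lemma descent_control_cases:
  "0 \<le> h t \<Longrightarrow> descent_control h g t = g t - min 1 (h t) * g t"
  "h t \<le> 0 \<Longrightarrow> descent_control h g t = g t + min 1 (- h t) * (1 - g t)"
  unfolding descent_control_def by auto

lemma descent_control_range:
  assumes "0 \<le> g t" "g t \<le> 1"
  shows "0 \<le> descent_control h g t \<and> descent_control h g t \<le> 1"
proof (cases "0 \<le> h t")
  case True
  have "min 1 (h t) * g t \<le> g t" "0 \<le> min 1 (h t) * g t"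
    using assms True by (auto intro: mult_left_le_one_le)
  moreover have "descent_control h g t = g t - min 1 (h t) * g t"
    using True by (rule descent_control_cases)
  ultimately show ?thesis using assms by linarith
next
  case False
  have "min 1 (- h t) * (1 - g t) \<le> 1 - g t" using assms False by (intro mult_left_le_one_le) auto
  then show ?thesis using assms False by (simp add: descent_control_cases)
qed

lemma descent_control_decreases:
  assumes "0 \<le> g t" "g t \<le> 1"
  shows "(descent_control h g t - g t) * h t \<le> 0"
proof (cases "0 \<le> h t")
  case True
  then show ?thesis using assms by (simp add: descent_control_cases mult_nonneg_nonpos)
next
  case False
  then show ?thesis using assms by (simp add: descent_control_cases mult_nonneg_nonpos)
qed

lemma descent_control_stationary:
  assumes "(descent_control h g t - g t) * h t = 0"
  shows "(0 < h t \<longrightarrow> g t = 0) \<and> (h t < 0 \<longrightarrow> g t = 1)"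
  using assms by (auto simp: descent_control_cases min_def split: if_splits)

lemma equilibrium_switching_condition:
  fixes I geq lam :: "real \<Rightarrow> real"
  assumes "0 < T"
    and I: "continuous_on {0..T} I" and geq: "continuous_on {0..T} geq"
    and geq_range: "\<forall>t\<in>{0..T}. 0 \<le> geq t \<and> geq t \<le> 1"
    and lam_ode: "\<forall>t\<in>{0..T}. (lam has_real_derivative geq t * (B - \<beta> * I t * geq t * (C - lam t)))
        (at t within {0..T})"
    and lam_T: "lam T = - R"
    and equilibrium: "\<forall>ga. continuous_on {0..T} ga \<and> (\<forall>t\<in>{0..T}. 0 \<le> ga t \<and> ga t \<le> 1)
        \<longrightarrow> cost T \<beta> B C R I geq geq \<le> cost T \<beta> B C R I geq ga"
    and t: "t \<in> {0..T}"
  shows "(0 < switching \<beta> B C I geq lam t \<longrightarrow> geq t = 0)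
    \<and> (switching \<beta> B C I geq lam t < 0 \<longrightarrow> geq t = 1)"
proof -
  let ?h = "switching \<beta> B C I geq lam"
  define ga where "ga = descent_control ?h geq"
  let ?F = "\<lambda>t. surv \<beta> ga geq I t * (ga t - geq t) * ?h t"
  have lam: "continuous_on {0..T} lam"
    using lam_ode by (intro DERIV_continuous_on) auto
  have h: "continuous_on {0..T} ?h"
    unfolding switching_def[abs_def] using I geq lam by (intro continuous_intros)
  have ga: "continuous_on {0..T} ga"
    unfolding ga_def using continuous_on_descent_control[OF h geq] .
  have "cost T \<beta> B C R I geq geq \<le> cost T \<beta> B C R I geq ga"
    using equilibrium ga geq_range descent_control_range unfolding ga_def by blast
  then have "0 \<le> integral {0..T} ?F"
    using cost_adjoint_representation[of T I geq _ lam B \<beta> C R] \<open>0 < T\<close> I geq ga lam_ode lam_T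
    by simp
  moreover have "continuous_on {0..T} ?F"
  proof -
    have "continuous_on {0..T} (\<lambda>s. \<beta> * ga s * geq s * I s)"
      using ga geq I by (intro continuous_intros)
    then show ?thesis using continuous_on_surv ga geq h by (intro continuous_intros)
  qed
  moreover have "?F s \<le> 0" if "s \<in> {0..T}" for s
    using descent_control_decreases[of geq s ?h] geq_range that surv_pos[of \<beta> ga geq I s]
    unfolding ga_def by (simp add: mult.assoc mult_nonneg_nonpos)
  ultimately have "?F t = 0"
    using continuous_nonpos_integral_nonneg_imp_zero[OF \<open>0 < T\<close>] t by blast
  then have "(ga t - geq t) * ?h t = 0"
    using surv_pos[of \<beta> ga geq I t] by (simp add: mult.assoc)
  then show ?thesis unfolding ga_def by (rule descent_control_stationary)
qed

lemma switching_condition_imp_exposure_formula: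
  fixes B C \<beta> i l x :: real
  assumes "0 < B" "0 < \<beta>" "0 < i" "0 \<le> x" "x \<le> 1"
    and cond: "(0 < - B + \<beta> * x * i * (C - l) \<longrightarrow> x = 0) \<and> (- B + \<beta> * x * i * (C - l) < 0 \<longrightarrow> x = 1)"
  shows "x = (if C > l then min (B / (\<beta> * i * (C - l))) 1 else 1)"
proof (cases "C > l")
  case True
  define D where "D = \<beta> * i * (C - l)"
  have "0 < D" unfolding D_def using assms True by simp
  have h: "- B + \<beta> * x * i * (C - l) = x * D - B" unfolding D_def by (simp add: algebra_simps)
  consider "x * D < B" | "x * D = B" | "x * D > B" by linarith
  then show ?thesis
  proof cases
    case 1
    then have "x = 1" using cond h by simp
    with 1 \<open>0 < D\<close> show ?thesis using True by (simp add: D_def field_simps)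
  next
    case 2
    then have "x = B / D" using \<open>0 < D\<close> by (simp add: field_simps)
    then show ?thesis using True \<open>x \<le> 1\<close> by (simp add: D_def)
  next
    case 3
    then show ?thesis using cond h \<open>0 < B\<close> by simp
  qed
next
  case False
  have "\<beta> * x * i * (C - l) \<le> 0"
    using False assms by (simp add: mult_nonneg_nonpos)
  then show ?thesis using cond False \<open>0 < B\<close> by simp
qed

theorem theorem1:
  fixes T \<beta> \<gamma> \<epsilon> B C R :: real
    and geq S I :: "real \<Rightarrow> real"
  assumes pos: "T > 0" "\<beta> > 0" "\<gamma> > 0" "\<epsilon> > 0" "B > 0" "C > 0" "R > 0"
    and geq_cont: "continuous_on {0..T} geq"
    and geq_range: "\<forall>t\<in>{0..T}. 0 \<le> geq t \<and> geq t \<le> 1"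
    and S_ode: "\<forall>t\<in>{0..T}. (S has_real_derivative (- \<beta> * (geq t)\<^sup>2 * S t * I t)) (at t within {0..T})"
    and I_ode: "\<forall>t\<in>{0..T}. (I has_real_derivative (\<beta> * (geq t)\<^sup>2 * S t * I t - \<gamma> * I t)) (at t within {0..T})"
    and S0: "S 0 = 1 - \<epsilon>" and I0: "I 0 = \<epsilon>"
    and equilibrium: "\<forall>ga. continuous_on {0..T} ga \<and> (\<forall>t\<in>{0..T}. 0 \<le> ga t \<and> ga t \<le> 1)
        \<longrightarrow> cost T \<beta> B C R I geq geq \<le> cost T \<beta> B C R I geq ga"
  shows "\<exists>lam :: real \<Rightarrow> real.
     (\<forall>t\<in>{0..T}. geq t = (if C > lam t then min (B / (\<beta> * I t * (C - lam t))) 1 else 1))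
   \<and> (\<forall>t\<in>{0..T}. (S has_real_derivative (- \<beta> * (geq t)\<^sup>2 * S t * I t)) (at t within {0..T}))
   \<and> (\<forall>t\<in>{0..T}. (I has_real_derivative (\<beta> * (geq t)\<^sup>2 * S t * I t - \<gamma> * I t)) (at t within {0..T}))
   \<and> (\<forall>t\<in>{0..T}. (lam has_real_derivative (geq t * (B - \<beta> * I t * geq t * (C - lam t)))) (at t within {0..T}))
   \<and> S 0 = 1 - \<epsilon> \<and> I 0 = \<epsilon> \<and> lam T = - R"
proof -
  have S: "continuous_on {0..T} S" and I: "continuous_on {0..T} I"
    using S_ode I_ode by (auto intro!: DERIV_continuous_on)
  have I_pos: "0 < I t" if "t \<in> {0..T}" for t
  proof -
    have "continuous_on {0..T} (\<lambda>t. \<beta> * (geq t)\<^sup>2 * S t - \<gamma>)"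
      using S geq_cont by (intro continuous_intros)
    moreover have "(I has_real_derivative (\<beta> * (geq s)\<^sup>2 * S s - \<gamma>) * I s) (at s within {0..T})"
      if "s \<in> {0..T}" for s
      using I_ode that by (simp add: algebra_simps)
    ultimately have "I t = I 0 * exp (integral {0..t} (\<lambda>t. \<beta> * (geq t)\<^sup>2 * S t - \<gamma>))"
      by (rule linear_ode_solution_formula) (use that in auto)
    then show ?thesis using I0 pos(4) by simp
  qed
  obtain lam where lam_ode: "\<forall>t\<in>{0..T}. (lam has_real_derivative
      (\<beta> * I t * (geq t)\<^sup>2) * lam t + geq t * (B - \<beta> * I t * geq t * C)) (at t within {0..T})"
    and lam_T: "lam T = - R"
  proof -
    have "continuous_on {0..T} (\<lambda>t. \<beta> * I t * (geq t)\<^sup>2)"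
      and "continuous_on {0..T} (\<lambda>t. geq t * (B - \<beta> * I t * geq t * C))"
      using I geq_cont by (auto intro!: continuous_intros)
    then show ?thesis using that linear_ode_terminal_value_solvable by blast
  qed
  have adjoint: "\<forall>t\<in>{0..T}. (lam has_real_derivative geq t * (B - \<beta> * I t * geq t * (C - lam t)))
      (at t within {0..T})"
    using lam_ode by (simp add: algebra_simps power2_eq_square)
  have "geq t = (if C > lam t then min (B / (\<beta> * I t * (C - lam t))) 1 else 1)"
    if "t \<in> {0..T}" for t
    using switching_condition_imp_exposure_formula[OF pos(5,2) I_pos[OF that]] geq_range that
      equilibrium_switching_condition[OF pos(1) I geq_cont geq_range adjoint lam_T equilibrium that]
    unfolding switching_def by auto
  with adjoint lam_T S_ode I_ode S0 I0 show ?thesis by blast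
qed

end
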